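(* If $V=\langle v_1,\dots,v_\ell\rangle$ is a sequence of moves that can be applied (successively) to the distribution $\mu$, then $V\mu\preceq\bar V\mu$, where $\bar V=\langle\bar v_1,\dots,\bar v_\ell\rangle$ is the sequence of extreme moves on the same intervals.
   Context: A distribution is a finite set $\{(x_1,m_1),\dots,(x_k,m_k)\}$, $m_i>0$; $\mu(A)=\sum_{x_i\in A}m_i$; $M_j[\mu]=\sum_im_ix_i^j$. A move $v=([a,b],\delta)$ has $\delta$ a signed distribution on $[a,b]$ with $M_0[\delta]=M_1[\delta]=0$; it applies to $\mu$ if $\mu+\delta$ is a distribution, and $v\mu=\mu+\delta$; $V\mu$ denotes the result of applying $v_1,\dots,v_\ell$ in order. The extreme move $\bar v$ on $[a,b]$ maps any distribution $\mu$ to the distribution $\mu'$ with $\mu'\{a<x<b\}=0$, $\mu'(\{x\})=\mu(\{x\})$ for $x\notin[a,b]$, $M_0[\mu']=M_0[\mu]$, $M_1[\mu']=M_1[\mu]$. $\mu'$ is a basic split of $\mu$ if obtained by replacing one point mass $(x_i,m_i)$ by finitely many point masses of total mass $m_i$ and center of mass $x_i$; $\mu\preceq\mu'$ if $\mu'$ is obtained from $\mu$ by zero or more basic splits. *)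

theory Defs
  imports Complex_Main
begin

text \<open>A (signed) distribution is represented as a finitely supported function
  real => real assigning to each point its mass.\<close>

type_synonym sdist = "real \<Rightarrow> real"

definition supp :: "sdist \<Rightarrow> real set" where
  "supp \<mu> = {x. \<mu> x \<noteq> 0}"

definition is_signed_dist :: "sdist \<Rightarrow> bool" where
  "is_signed_dist \<mu> \<longleftrightarrow> finite (supp \<mu>)"

definition is_dist :: "sdist \<Rightarrow> bool" where
  "is_dist \<mu> \<longleftrightarrow> finite (supp \<mu>) \<and> (\<forall>x. \<mu> x \<ge> 0)"

definition mom :: "nat \<Rightarrow> sdist \<Rightarrow> real" where
  "mom j \<mu> = (\<Sum>x\<in>supp \<mu>. \<mu> x * x ^ j)"

type_synonym move = "real \<times> real \<times> sdist"

definition is_move :: "move \<Rightarrow> bool" where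
  "is_move v \<longleftrightarrow> (case v of (a, b, \<delta>) \<Rightarrow>
     a \<le> b \<and> is_signed_dist \<delta> \<and> supp \<delta> \<subseteq> {a..b} \<and>
     mom 0 \<delta> = 0 \<and> mom 1 \<delta> = 0)"

definition apply_move :: "move \<Rightarrow> sdist \<Rightarrow> sdist" where
  "apply_move v \<mu> = (case v of (a, b, \<delta>) \<Rightarrow> (\<lambda>x. \<mu> x + \<delta> x))"

definition move_applies :: "move \<Rightarrow> sdist \<Rightarrow> bool" where
  "move_applies v \<mu> \<longleftrightarrow> is_dist (apply_move v \<mu>)"

fun applies_seq :: "move list \<Rightarrow> sdist \<Rightarrow> bool" where
  "applies_seq [] \<mu> = True"
| "applies_seq (v # vs) \<mu> = (move_applies v \<mu> \<and> applies_seq vs (apply_move v \<mu>))"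

fun apply_seq :: "move list \<Rightarrow> sdist \<Rightarrow> sdist" where
  "apply_seq [] \<mu> = \<mu>"
| "apply_seq (v # vs) \<mu> = apply_seq vs (apply_move v \<mu>)"

definition extreme_move :: "real \<Rightarrow> real \<Rightarrow> sdist \<Rightarrow> sdist" where
  "extreme_move a b \<mu> = (THE \<mu>'. is_dist \<mu>' \<and>
      (\<forall>x. a < x \<and> x < b \<longrightarrow> \<mu>' x = 0) \<and>
      (\<forall>x. x \<notin> {a..b} \<longrightarrow> \<mu>' x = \<mu> x) \<and>
      mom 0 \<mu>' = mom 0 \<mu> \<and> mom 1 \<mu>' = mom 1 \<mu>)"

fun extreme_seq :: "move list \<Rightarrow> sdist \<Rightarrow> sdist" where
  "extreme_seq [] \<mu> = \<mu>"
| "extreme_seq ((a, b, \<delta>) # vs) \<mu> = extreme_seq vs (extreme_move a b \<mu>)"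

definition basic_split :: "sdist \<Rightarrow> sdist \<Rightarrow> bool" where
  "basic_split \<mu> \<mu>' \<longleftrightarrow> (\<exists>x \<nu>. \<mu> x > 0 \<and> is_dist \<nu> \<and>
      mom 0 \<nu> = \<mu> x \<and> mom 1 \<nu> = \<mu> x * x \<and>
      \<mu>' = (\<lambda>y. (if y = x then 0 else \<mu> y) + \<nu> y))"

definition split_le :: "sdist \<Rightarrow> sdist \<Rightarrow> bool" (infix "\<preceq>\<^sub>s" 50) where
  "\<mu> \<preceq>\<^sub>s \<mu>' \<longleftrightarrow> basic_split\<^sup>*\<^sup>* \<mu> \<mu>'"

end

theory Submission
  imports Defs
begin

(* The extreme move on [a,b] is realised explicitly by the operator
   sweep a b: keep the mass outside the open interval (a,b) and move the mass
   inside it to the endpoints a and b, preserving total mass and centre of mass.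
   sweep a b is additive, and it is the unique map with the defining properties of
   extreme_move, so extreme_move a b = sweep a b on distributions.
   Three facts then give the theorem:
   (1) mu is below sweep a b mu in the splitting order (split the interior atoms
       one at a time);
   (2) sweep a b is monotone for the splitting order; for a single basic split
       this rests on a decomposition lemma: a distribution with no mass in (a,b)
       and mean x in (a,b) splits into a part with mean a and a part with mean b
       of the right masses;
   (3) a move (a,b,delta) does not change the extreme move on [a,b], since the
       latter only depends on the mass outside [a,b] and on the first two moments. *)

section \<open>Finitely supported mass functions\<close>

definition point_mass :: "real \<Rightarrow> real \<Rightarrow> sdist" where
  "point_mass x c = (\<lambda>z. if z = x then c else 0)"

lemma dist_imp_signed: "is_dist f \<Longrightarrow> is_signed_dist f"
  by (simp add: is_dist_def is_signed_dist_def)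

lemma signed_add: "is_signed_dist f \<Longrightarrow> is_signed_dist g \<Longrightarrow> is_signed_dist (\<lambda>z. f z + g z)"
  unfolding is_signed_dist_def
  by (rule finite_subset[of _ "supp f \<union> supp g"]) (auto simp: supp_def)

lemma signed_scale: "is_signed_dist f \<Longrightarrow> is_signed_dist (\<lambda>z. c * f z)"
  unfolding is_signed_dist_def by (rule finite_subset[of _ "supp f"]) (auto simp: supp_def)

lemma signed_restrict: "is_signed_dist f \<Longrightarrow> is_signed_dist (\<lambda>z. if P z then f z else 0)"
  unfolding is_signed_dist_def by (rule finite_subset[of _ "supp f"]) (auto simp: supp_def)

lemma signed_point_mass: "is_signed_dist (point_mass x c)"
  unfolding is_signed_dist_def
  by (rule finite_subset[of _ "{x}"]) (auto simp: supp_def point_mass_def)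

lemma dist_add: "is_dist f \<Longrightarrow> is_dist g \<Longrightarrow> is_dist (\<lambda>z. f z + g z)"
  using signed_add[of f g] by (auto simp: is_dist_def is_signed_dist_def)

lemma dist_scale: "is_dist f \<Longrightarrow> c \<ge> 0 \<Longrightarrow> is_dist (\<lambda>z. c * f z)"
  using signed_scale[of f c] by (auto simp: is_dist_def is_signed_dist_def)

lemma dist_restrict: "is_dist f \<Longrightarrow> is_dist (\<lambda>z. if P z then f z else 0)"
  using signed_restrict[of f P] by (auto simp: is_dist_def is_signed_dist_def)

lemma dist_point_mass: "c \<ge> 0 \<Longrightarrow> is_dist (point_mass x c)"
  using signed_point_mass[of x c] by (auto simp: is_dist_def is_signed_dist_def point_mass_def)

lemma mom_over: "finite S \<Longrightarrow> supp f \<subseteq> S \<Longrightarrow> mom j f = (\<Sum>z\<in>S. f z * z ^ j)"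
  unfolding mom_def by (rule sum.mono_neutral_left) (auto simp: supp_def)

lemma mom_add:
  assumes "is_signed_dist f" "is_signed_dist g"
  shows "mom j (\<lambda>z. f z + g z) = mom j f + mom j g"
proof -
  let ?S = "supp f \<union> supp g"
  have fin: "finite ?S" using assms by (simp add: is_signed_dist_def)
  have "mom j (\<lambda>z. f z + g z) = (\<Sum>z\<in>?S. (f z + g z) * z ^ j)"
    by (rule mom_over[OF fin]) (auto simp: supp_def)
  also have "\<dots> = (\<Sum>z\<in>?S. f z * z ^ j) + (\<Sum>z\<in>?S. g z * z ^ j)"
    by (simp add: distrib_right sum.distrib)
  also have "\<dots> = mom j f + mom j g"
    using mom_over[OF fin, of f j] mom_over[OF fin, of g j] by auto
  finally show ?thesis .
qed

lemma mom_diff: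
  assumes "is_signed_dist f" "is_signed_dist g"
  shows "mom j (\<lambda>z. f z - g z) = mom j f - mom j g"
proof -
  let ?S = "supp f \<union> supp g"
  have fin: "finite ?S" using assms by (simp add: is_signed_dist_def)
  have "mom j (\<lambda>z. f z - g z) = (\<Sum>z\<in>?S. (f z - g z) * z ^ j)"
    by (rule mom_over[OF fin]) (auto simp: supp_def)
  also have "\<dots> = (\<Sum>z\<in>?S. f z * z ^ j) - (\<Sum>z\<in>?S. g z * z ^ j)"
    by (simp add: left_diff_distrib sum_subtractf)
  also have "\<dots> = mom j f - mom j g"
    using mom_over[OF fin, of f j] mom_over[OF fin, of g j] by auto
  finally show ?thesis .
qed

lemma mom_scale:
  assumes "is_signed_dist f"
  shows "mom j (\<lambda>z. c * f z) = c * mom j f"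
proof -
  have fin: "finite (supp f)" using assms by (simp add: is_signed_dist_def)
  have "mom j (\<lambda>z. c * f z) = (\<Sum>z\<in>supp f. (c * f z) * z ^ j)"
    by (rule mom_over[OF fin]) (auto simp: supp_def)
  then show ?thesis unfolding mom_def by (simp add: sum_distrib_left mult.assoc)
qed

lemma mom_point_mass: "mom j (point_mass x c) = c * x ^ j"
  by (subst mom_over[of "{x}"]) (auto simp: supp_def point_mass_def)

lemma mom_zero: "mom j (\<lambda>z. 0) = 0"
  by (simp add: mom_def supp_def)

lemma dist_zero_if_mass_zero:
  assumes "is_dist f" "mom 0 f = 0"
  shows "f = (\<lambda>z. 0)"
proof -
  have fin: "finite (supp f)" and nonneg: "\<And>z. f z \<ge> 0" using assms by (auto simp: is_dist_def)
  have "(\<Sum>z\<in>supp f. f z) = 0" using assms(2) by (simp add: mom_def)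
  then have "\<forall>z\<in>supp f. f z = 0" using sum_nonneg_eq_0_iff[OF fin] nonneg by blast
  then show ?thesis by (auto simp: supp_def)
qed

lemma mom0_nonneg: "is_dist f \<Longrightarrow> mom 0 f \<ge> 0"
  unfolding mom_def is_dist_def by (simp add: sum_nonneg)

lemma mom1_lower:
  assumes "is_dist f" "\<And>z. f z \<noteq> 0 \<Longrightarrow> a \<le> z"
  shows "a * mom 0 f \<le> mom 1 f"
proof -
  have "a * mom 0 f = (\<Sum>z\<in>supp f. f z * a)"
    by (simp add: mom_def sum_distrib_left mult.commute)
  also have "\<dots> \<le> (\<Sum>z\<in>supp f. f z * z)"
    using assms by (intro sum_mono mult_left_mono) (auto simp: supp_def is_dist_def)
  finally show ?thesis by (simp add: mom_def)
qed

lemma mom1_upper: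
  assumes "is_dist f" "\<And>z. f z \<noteq> 0 \<Longrightarrow> z \<le> b"
  shows "mom 1 f \<le> b * mom 0 f"
proof -
  have "(\<Sum>z\<in>supp f. f z * z) \<le> (\<Sum>z\<in>supp f. f z * b)"
    using assms by (intro sum_mono mult_left_mono) (auto simp: supp_def is_dist_def)
  also have "\<dots> = b * mom 0 f" by (simp add: mom_def sum_distrib_left mult.commute)
  finally show ?thesis by (simp add: mom_def)
qed

lemma two_point_moments_zero:
  assumes supp: "supp d \<subseteq> {a, b}" and m0: "mom 0 d = 0" and m1: "mom 1 d = 0"
  shows "d = (\<lambda>z. 0)"
proof -
  have mom: "mom j d = (\<Sum>z\<in>{a, b}. d z * z ^ j)" for j by (rule mom_over[OF _ supp]) simp
  have "d a = 0 \<and> d b = 0"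
  proof (cases "a = b")
    case True
    then show ?thesis using mom[of 0] m0 by simp
  next
    case False
    then have "d a + d b = 0" "d a * a + d b * b = 0" using mom[of 0] mom[of 1] m0 m1 by auto
    moreover have "d b * (b - a) = (d a * a + d b * b) - a * (d a + d b)"
      by (simp add: algebra_simps)
    ultimately show ?thesis using False by auto
  qed
  then show ?thesis using supp by (auto simp: supp_def)
qed

section \<open>The extreme move made explicit\<close>

text \<open>The restriction of a mass function to the open interval (a,b), its complement,
  and the masses that the sweep puts on the endpoints (these are the unique weights
  at a and b reproducing the mass and first moment of the interior part).\<close>

definition inner :: "real \<Rightarrow> real \<Rightarrow> sdist \<Rightarrow> sdist" where
  "inner a b \<mu> = (\<lambda>z. if a < z \<and> z < b then \<mu> z else 0)"

definition outer :: "real \<Rightarrow> real \<Rightarrow> sdist \<Rightarrow> sdist" where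
  "outer a b \<mu> = (\<lambda>z. if a < z \<and> z < b then 0 else \<mu> z)"

definition left_weight :: "real \<Rightarrow> real \<Rightarrow> sdist \<Rightarrow> real" where
  "left_weight a b \<mu> = (b * mom 0 (inner a b \<mu>) - mom 1 (inner a b \<mu>)) / (b - a)"

definition right_weight :: "real \<Rightarrow> real \<Rightarrow> sdist \<Rightarrow> real" where
  "right_weight a b \<mu> = (mom 1 (inner a b \<mu>) - a * mom 0 (inner a b \<mu>)) / (b - a)"

definition sweep :: "real \<Rightarrow> real \<Rightarrow> sdist \<Rightarrow> sdist" where
  "sweep a b \<mu> = (\<lambda>z. outer a b \<mu> z + point_mass a (left_weight a b \<mu>) z
                        + point_mass b (right_weight a b \<mu>) z)"

lemma signed_inner: "is_signed_dist \<mu> \<Longrightarrow> is_signed_dist (inner a b \<mu>)"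
  unfolding inner_def by (rule signed_restrict)

lemma signed_outer: "is_signed_dist \<mu> \<Longrightarrow> is_signed_dist (outer a b \<mu>)"
  unfolding is_signed_dist_def
  by (rule finite_subset[of _ "supp \<mu>"]) (auto simp: supp_def outer_def)

lemma dist_outer: "is_dist \<mu> \<Longrightarrow> is_dist (outer a b \<mu>)"
  using signed_outer[of \<mu> a b] by (auto simp: is_dist_def is_signed_dist_def outer_def)

lemma signed_sweep: "is_signed_dist \<mu> \<Longrightarrow> is_signed_dist (sweep a b \<mu>)"
  unfolding sweep_def by (intro signed_add signed_outer signed_point_mass)

lemma sweep_vanishes_inside: "a < z \<Longrightarrow> z < b \<Longrightarrow> sweep a b \<mu> z = 0"
  by (auto simp: sweep_def outer_def point_mass_def)

lemma sweep_outside: "a \<le> b \<Longrightarrow> z \<notin> {a..b} \<Longrightarrow> sweep a b \<mu> z = \<mu> z"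
  by (auto simp: sweep_def outer_def point_mass_def)

lemma sweep_moments:
  assumes "is_signed_dist \<mu>" "j \<le> 1"
  shows "mom j (sweep a b \<mu>) = mom j \<mu>"
proof -
  have signed: "is_signed_dist (outer a b \<mu>)" "is_signed_dist (inner a b \<mu>)"
    using assms by (auto intro: signed_outer signed_inner)
  have "mom j (sweep a b \<mu>)
        = mom j (outer a b \<mu>) + left_weight a b \<mu> * a ^ j + right_weight a b \<mu> * b ^ j"
    unfolding sweep_def by (simp add: mom_add signed_add signed signed_point_mass mom_point_mass)
  moreover have "mom j \<mu> = mom j (outer a b \<mu>) + mom j (inner a b \<mu>)"
  proof -
    have "\<mu> = (\<lambda>z. outer a b \<mu> z + inner a b \<mu> z)" by (auto simp: outer_def inner_def)
    then show ?thesis by (metis mom_add[OF signed])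
  qed
  moreover have "left_weight a b \<mu> * a ^ j + right_weight a b \<mu> * b ^ j = mom j (inner a b \<mu>)"
  proof (cases "a < b")
    case True
    define M where "M = (\<lambda>j. mom j (inner a b \<mu>))"
    have "left_weight a b \<mu> * a ^ j + right_weight a b \<mu> * b ^ j
          = ((b * M 0 - M 1) * a ^ j + (M 1 - a * M 0) * b ^ j) / (b - a)"
      by (simp add: left_weight_def right_weight_def M_def add_divide_distrib)
    moreover have "(b * M 0 - M 1) * a ^ j + (M 1 - a * M 0) * b ^ j = M j * (b - a)"
      using \<open>j \<le> 1\<close> by (cases j) (auto simp: algebra_simps)
    ultimately show ?thesis using True by (simp add: M_def)
  next
    case False
    then have "inner a b \<mu> = (\<lambda>z. 0)" by (auto simp: inner_def)
    then show ?thesis by (simp add: left_weight_def right_weight_def mom_zero)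
  qed
  ultimately show ?thesis by simp
qed

lemma dist_sweep:
  assumes "is_dist \<mu>" "a \<le> b"
  shows "is_dist (sweep a b \<mu>)"
proof -
  have inner: "is_dist (inner a b \<mu>)" unfolding inner_def by (rule dist_restrict[OF assms(1)])
  have "mom 1 (inner a b \<mu>) \<le> b * mom 0 (inner a b \<mu>)"
    by (rule mom1_upper[OF inner]) (auto simp: inner_def split: if_splits)
  moreover have "a * mom 0 (inner a b \<mu>) \<le> mom 1 (inner a b \<mu>)"
    by (rule mom1_lower[OF inner]) (auto simp: inner_def split: if_splits)
  ultimately have "left_weight a b \<mu> \<ge> 0" "right_weight a b \<mu> \<ge> 0"
    using assms(2) by (auto simp: left_weight_def right_weight_def)
  then show ?thesis unfolding sweep_def by (intro dist_add dist_point_mass dist_outer assms(1))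
qed

lemma sweep_add:
  assumes "is_signed_dist f" "is_signed_dist g"
  shows "sweep a b (\<lambda>z. f z + g z) = (\<lambda>z. sweep a b f z + sweep a b g z)"
proof -
  have "inner a b (\<lambda>z. f z + g z) = (\<lambda>z. inner a b f z + inner a b g z)"
    by (auto simp: inner_def)
  then have m: "mom j (inner a b (\<lambda>z. f z + g z)) = mom j (inner a b f) + mom j (inner a b g)" for j
    using mom_add[OF signed_inner signed_inner, OF assms] by simp
  have "left_weight a b (\<lambda>z. f z + g z) = left_weight a b f + left_weight a b g"
    "right_weight a b (\<lambda>z. f z + g z) = right_weight a b f + right_weight a b g"
    unfolding left_weight_def right_weight_def m by (simp_all add: diff_divide_distrib add_divide_distrib algebra_simps)
  moreover have "outer a b (\<lambda>z. f z + g z) = (\<lambda>z. outer a b f z + outer a b g z)"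
    by (simp add: outer_def fun_eq_iff)
  ultimately show ?thesis unfolding sweep_def by (simp add: fun_eq_iff point_mass_def)
qed

lemma sweep_fixed:
  assumes "\<And>z. a < z \<Longrightarrow> z < b \<Longrightarrow> \<mu> z = 0"
  shows "sweep a b \<mu> = \<mu>"
proof -
  have "inner a b \<mu> = (\<lambda>z. 0)" using assms by (auto simp: inner_def)
  then show ?thesis
    using assms by (auto simp: sweep_def outer_def left_weight_def right_weight_def mom_zero point_mass_def)
qed

lemma sweep_point_mass_inside:
  assumes "a < x" "x < b"
  shows "sweep a b (point_mass x c)
         = (\<lambda>z. point_mass a (c * (b - x) / (b - a)) z + point_mass b (c * (x - a) / (b - a)) z)"
proof -
  have "inner a b (point_mass x c) = point_mass x c"
    "outer a b (point_mass x c) = (\<lambda>z. 0)"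
    using assms by (auto simp: inner_def outer_def point_mass_def)
  then show ?thesis by (simp add: sweep_def left_weight_def right_weight_def mom_point_mass algebra_simps)
qed

text \<open>The sweep is the extreme move: it satisfies the defining conditions, and any two
  solutions differ by a signed mass on the endpoints with vanishing moments.\<close>
lemma extreme_move_eq_sweep:
  assumes "is_dist \<mu>" "a \<le> b"
  shows "extreme_move a b \<mu> = sweep a b \<mu>"
  unfolding extreme_move_def
proof (rule the_equality)
  have "is_signed_dist \<mu>" using assms(1) by (rule dist_imp_signed)
  then show "is_dist (sweep a b \<mu>) \<and> (\<forall>x. a < x \<and> x < b \<longrightarrow> sweep a b \<mu> x = 0) \<and>
      (\<forall>x. x \<notin> {a..b} \<longrightarrow> sweep a b \<mu> x = \<mu> x) \<and>
      mom 0 (sweep a b \<mu>) = mom 0 \<mu> \<and> mom 1 (sweep a b \<mu>) = mom 1 \<mu>"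
    using dist_sweep[OF assms] sweep_vanishes_inside sweep_outside[OF assms(2)] sweep_moments
    by auto
next
  fix \<mu>'
  assume \<mu>': "is_dist \<mu>' \<and> (\<forall>x. a < x \<and> x < b \<longrightarrow> \<mu>' x = 0) \<and>
      (\<forall>x. x \<notin> {a..b} \<longrightarrow> \<mu>' x = \<mu> x) \<and> mom 0 \<mu>' = mom 0 \<mu> \<and> mom 1 \<mu>' = mom 1 \<mu>"
  define d where "d = (\<lambda>z. \<mu>' z - sweep a b \<mu> z)"
  have signed: "is_signed_dist \<mu>'" "is_signed_dist (sweep a b \<mu>)"
    using \<mu>' assms by (auto intro: dist_imp_signed dist_sweep)
  have "d z = 0" if "z \<noteq> a" "z \<noteq> b" for z
  proof (cases "a < z \<and> z < b")
    case True
    then show ?thesis using \<mu>' sweep_vanishes_inside[of a z b \<mu>] by (simp add: d_def)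
  next
    case False
    then have "z \<notin> {a..b}" using that by auto
    then show ?thesis using \<mu>' sweep_outside[OF assms(2)] by (simp add: d_def)
  qed
  then have "supp d \<subseteq> {a, b}" by (auto simp: supp_def)
  moreover have "mom j d = 0" if "j \<le> 1" for j
    using mom_diff[OF signed, of j] sweep_moments[OF dist_imp_signed[OF assms(1)] that] \<mu>' that
    by (cases j) (auto simp: d_def)
  ultimately have "d = (\<lambda>z. 0)" by (intro two_point_moments_zero) auto
  then show "\<mu>' = sweep a b \<mu>" by (auto simp: d_def fun_eq_iff)
qed

text \<open>The extreme move on [a,b] only depends on the mass outside [a,b] and on the
  first two moments; hence a move on [a,b] does not change it.\<close>
lemma extreme_move_after_move:
  assumes "is_move (a, b, \<delta>)" "is_signed_dist \<mu>"
  shows "extreme_move a b (apply_move (a, b, \<delta>) \<mu>) = extreme_move a b \<mu>"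
proof -
  have \<delta>: "is_signed_dist \<delta>" "supp \<delta> \<subseteq> {a..b}" "mom 0 \<delta> = 0" "mom 1 \<delta> = 0"
    using assms(1) by (auto simp: is_move_def)
  let ?\<mu>1 = "apply_move (a, b, \<delta>) \<mu>"
  have "?\<mu>1 x = \<mu> x" if "x \<notin> {a..b}" for x using \<delta>(2) that by (auto simp: apply_move_def supp_def)
  moreover have "mom j ?\<mu>1 = mom j \<mu>" if "j \<le> 1" for j
    using mom_add[OF assms(2) \<delta>(1), of j] \<delta> that by (cases j) (auto simp: apply_move_def)
  ultimately show ?thesis unfolding extreme_move_def by simp
qed

section \<open>The splitting order\<close>

lemma split_point_mass:
  assumes "is_dist \<rho>" "is_dist K" "c \<ge> 0" "mom 0 K = c" "mom 1 K = c * x"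
  shows "(\<lambda>z. \<rho> z + point_mass x c z) \<preceq>\<^sub>s (\<lambda>z. \<rho> z + K z)"
proof (cases "c = 0")
  case True
  then have "K = (\<lambda>z. 0)" using dist_zero_if_mass_zero assms by simp
  then show ?thesis using True by (simp add: split_le_def point_mass_def)
next
  case False
  have "\<rho> x \<ge> 0" using assms(1) by (simp add: is_dist_def)
  define \<nu> where "\<nu> = (\<lambda>z. point_mass x (\<rho> x) z + K z)"
  have mom_\<nu>: "mom j \<nu> = \<rho> x * x ^ j + mom j K" for j
    unfolding \<nu>_def using assms by (simp add: mom_add signed_point_mass dist_imp_signed mom_point_mass)
  have "basic_split (\<lambda>z. \<rho> z + point_mass x c z) (\<lambda>z. \<rho> z + K z)"
    unfolding basic_split_def
  proof (intro exI conjI)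
    show "\<rho> x + point_mass x c x > 0" using False assms(3) \<open>\<rho> x \<ge> 0\<close> by (simp add: point_mass_def)
    show "is_dist \<nu>" unfolding \<nu>_def by (intro dist_add dist_point_mass \<open>\<rho> x \<ge> 0\<close> assms(2))
    show "mom 0 \<nu> = \<rho> x + point_mass x c x"
      using mom_\<nu>[of 0] assms(4) by (simp add: point_mass_def)
    show "mom 1 \<nu> = (\<rho> x + point_mass x c x) * x"
      using mom_\<nu>[of 1] assms(5) by (simp add: point_mass_def algebra_simps)
    show "(\<lambda>z. \<rho> z + K z) = (\<lambda>y. (if y = x then 0 else \<rho> y + point_mass x c y) + \<nu> y)"
      by (auto simp: \<nu>_def point_mass_def)
  qed
  then show ?thesis by (simp add: split_le_def)
qed

text \<open>The splitting order is transitive; the two rules mixing it with equations are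
  declared so that calculations over mass functions (lambda terms) chain directly.\<close>
lemma split_le_trans [trans]: "\<mu> \<preceq>\<^sub>s \<nu> \<Longrightarrow> \<nu> \<preceq>\<^sub>s \<xi> \<Longrightarrow> \<mu> \<preceq>\<^sub>s \<xi>"
  unfolding split_le_def by (rule rtranclp_trans)

lemma eq_split_le_trans [trans]: "\<mu> = \<nu> \<Longrightarrow> \<nu> \<preceq>\<^sub>s \<xi> \<Longrightarrow> \<mu> \<preceq>\<^sub>s \<xi>"
  by simp

lemma split_le_eq_trans [trans]: "\<mu> \<preceq>\<^sub>s \<nu> \<Longrightarrow> \<nu> = \<xi> \<Longrightarrow> \<mu> \<preceq>\<^sub>s \<xi>"
  by simp

lemma basic_split_dist:
  assumes "basic_split \<mu> \<nu>" "is_dist \<mu>"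
  shows "is_dist \<nu>"
proof -
  obtain x K where K: "is_dist K" and \<nu>: "\<nu> = (\<lambda>y. (if y = x then 0 else \<mu> y) + K y)"
    using assms(1) unfolding basic_split_def by blast
  have "(\<lambda>y. if y = x then 0 else \<mu> y) = (\<lambda>y. if y \<noteq> x then \<mu> y else 0)" by auto
  then have "is_dist (\<lambda>y. if y = x then 0 else \<mu> y)"
    by (simp only:) (rule dist_restrict[OF assms(2)])
  then show ?thesis unfolding \<nu> using K by (rule dist_add)
qed

lemma split_le_dist: "\<mu> \<preceq>\<^sub>s \<nu> \<Longrightarrow> is_dist \<mu> \<Longrightarrow> is_dist \<nu>"
  unfolding split_le_def by (induction rule: rtranclp_induct) (auto intro: basic_split_dist)

lemma sweep_presweep_point_mass:
  assumes "is_signed_dist \<rho>"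
  shows "sweep a b (\<lambda>z. \<rho> z + sweep a b (point_mass y c) z) = sweep a b (\<lambda>z. \<rho> z + point_mass y c z)"
proof -
  let ?\<sigma> = "sweep a b (point_mass y c)"
  have "sweep a b ?\<sigma> = ?\<sigma>" by (rule sweep_fixed) (simp add: sweep_vanishes_inside)
  then show ?thesis using assms by (simp add: sweep_add signed_sweep signed_point_mass)
qed

text \<open>Induction over a finite set S covering the
  interior support: an atom at y is replaced by its sweep, after which the interior
  support is covered by S without y.\<close>
lemma le_sweep_covered:
  assumes "finite S" "is_dist \<mu>" "supp \<mu> \<inter> {a<..<b} \<subseteq> S" "a \<le> b"
  shows "\<mu> \<preceq>\<^sub>s sweep a b \<mu>"
  using assms(1-3)
proof (induction S arbitrary: \<mu> rule: finite_induct)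
  case empty
  have "\<mu> z = 0" if "a < z" "z < b" for z using empty.prems(2) that by (auto simp: supp_def)
  then have "sweep a b \<mu> = \<mu>" by (rule sweep_fixed)
  then show ?case by (simp add: split_le_def)
next
  case (insert y S)
  define c where "c = \<mu> y"
  define \<rho> where "\<rho> = (\<lambda>z. if z \<noteq> y then \<mu> z else 0)"
  define \<sigma> where "\<sigma> = sweep a b (point_mass y c)"
  have c: "c \<ge> 0" using insert.prems(1) by (simp add: c_def is_dist_def)
  have \<rho>: "is_dist \<rho>" unfolding \<rho>_def by (rule dist_restrict[OF insert.prems(1)])
  have \<mu>: "\<mu> = (\<lambda>z. \<rho> z + point_mass y c z)" by (auto simp: \<rho>_def point_mass_def c_def)
  have \<sigma>: "is_dist \<sigma>" "mom 0 \<sigma> = c" "mom 1 \<sigma> = c * y"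
    using dist_sweep[OF dist_point_mass[OF c] assms(4)] sweep_moments[OF signed_point_mass]
    by (auto simp: \<sigma>_def mom_point_mass)
  have "z \<in> S" if "z \<in> supp (\<lambda>z. \<rho> z + \<sigma> z)" "a < z" "z < b" for z
  proof -
    have "\<rho> z \<noteq> 0" using that sweep_vanishes_inside[of a z b] by (simp add: supp_def \<sigma>_def)
    then have "z \<noteq> y" "z \<in> supp \<mu>" by (auto simp: \<rho>_def supp_def split: if_splits)
    then show ?thesis using insert.prems(2) that(2,3) by auto
  qed
  then have "supp (\<lambda>z. \<rho> z + \<sigma> z) \<inter> {a<..<b} \<subseteq> S" by auto
  then have IH: "(\<lambda>z. \<rho> z + \<sigma> z) \<preceq>\<^sub>s sweep a b (\<lambda>z. \<rho> z + \<sigma> z)"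
    using insert.IH dist_add[OF \<rho> \<sigma>(1)] by blast
  have "\<mu> \<preceq>\<^sub>s (\<lambda>z. \<rho> z + \<sigma> z)" by (subst \<mu>) (rule split_point_mass[OF \<rho> \<sigma>(1) c \<sigma>(2,3)])
  also have "\<dots> \<preceq>\<^sub>s sweep a b (\<lambda>z. \<rho> z + \<sigma> z)" by (rule IH)
  also have "\<dots> = sweep a b \<mu>"
    unfolding \<sigma>_def by (subst \<mu>) (rule sweep_presweep_point_mass[OF dist_imp_signed[OF \<rho>]])
  finally show ?case .
qed

lemma le_sweep:
  assumes "is_dist \<mu>" "a \<le> b"
  shows "\<mu> \<preceq>\<^sub>s sweep a b \<mu>"
  using le_sweep_covered[OF _ assms(1) subset_refl assms(2)] assms(1) by (simp add: is_dist_def)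

section \<open>Monotonicity of the sweep\<close>

lemma rescale_balanced_weights:
  fixes a p u w D P0 P1 Q0 Q1 :: real
  assumes nonneg: "0 \<le> u" "0 \<le> w" "0 \<le> p"
    and D: "D = P0 * w + Q0 * u" "D > 0" and centre: "w * P1 + u * Q1 = a * D"
    and fit: "p * w \<le> D" "p * u \<le> D"
  shows "\<exists>s r. 0 \<le> s \<and> s \<le> 1 \<and> 0 \<le> r \<and> r \<le> 1 \<and>
           s * P0 + r * Q0 = p \<and> s * P1 + r * Q1 = p * a"
proof -
  define t where "t = p / D"
  have tD: "t * D = p" using D(2) by (simp add: t_def)
  have "0 \<le> t * w" "t * w \<le> 1" "0 \<le> t * u" "t * u \<le> 1"
    using nonneg D(2) fit by (simp_all add: t_def field_simps)
  moreover have "t * w * P0 + t * u * Q0 = p"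
    using tD unfolding D(1) by (simp add: algebra_simps)
  moreover have "t * w * P1 + t * u * Q1 = p * a"
  proof -
    have "t * w * P1 + t * u * Q1 = t * (w * P1 + u * Q1)" by (simp add: algebra_simps)
    also have "\<dots> = (t * D) * a" unfolding centre by simp
    finally show ?thesis unfolding tD .
  qed
  ultimately show ?thesis by blast
qed

text \<open>The arithmetic core of the decomposition lemma below.  P0, P1 are the mass and
  first moment of the part of a distribution left of a, Q0, Q1 those of the part
  right of b; the total has mass c and centre x in (a,b).\<close>
lemma two_part_weights:
  fixes a b x c P0 P1 Q0 Q1 :: real
  assumes ax: "a < x" "x < b"
    and nonneg: "P0 \<ge> 0" "Q0 \<ge> 0"
    and left: "P1 \<le> a * P0" and right: "b * Q0 \<le> Q1"
    and mass: "P0 + Q0 = c" and first: "P1 + Q1 = c * x"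
  defines "p \<equiv> c * (b - x) / (b - a)"
  shows "\<exists>s r. 0 \<le> s \<and> s \<le> 1 \<and> 0 \<le> r \<and> r \<le> 1 \<and>
           s * P0 + r * Q0 = p \<and> s * P1 + r * Q1 = p * a"
proof -
  text \<open>Weights w, u balance the two parts around a; D is the mass of the balanced
    combination, which is rescaled to mass p.\<close>
  define u where "u = a * P0 - P1"
  define w where "w = Q1 - a * Q0"
  define D where "D = P0 * w + Q0 * u"
  have u: "u \<ge> 0" using left by (simp add: u_def)
  have w: "w \<ge> (b - a) * Q0" using right by (simp add: w_def algebra_simps)
  have "w - u = (P1 + Q1) - a * (P0 + Q0)" by (simp add: u_def w_def algebra_simps)
  then have wu: "w - u = c * (x - a)" using mass first by (simp add: algebra_simps)
  have "c \<ge> 0" using mass nonneg by simp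
  have "(b - a) * p = c * (b - x)" using ax by (simp add: p_def)
  then have p: "(b - a) * p = (b - a) * (P0 + Q0) + u - w"
    using wu mass by (simp add: algebra_simps)
  show ?thesis
  proof (cases "c = 0")
    case True
    then show ?thesis by (intro exI[of _ 0]) (simp add: p_def)
  next
    case False
    then have "c * (x - a) > 0" using ax \<open>c \<ge> 0\<close> by simp
    then have "w > u" using wu by simp
    have "D > 0"
    proof (cases "P0 = 0")
      case True
      then have "Q0 = c" using mass by simp
      then have "P1 \<le> c * (x - b)" using first right by (simp add: algebra_simps)
      moreover have "c * (x - b) < 0"
        using \<open>c * (x - a) > 0\<close> ax by (simp add: mult_pos_neg zero_less_mult_iff)
      ultimately have "u > 0" using True by (simp add: u_def)
      then show ?thesis using True \<open>Q0 = c\<close> \<open>c * (x - a) > 0\<close> ax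
        by (simp add: D_def zero_less_mult_iff)
    next
      case False
      then have "P0 * w > 0" using nonneg u \<open>w > u\<close> by simp
      moreover have "Q0 * u \<ge> 0" using nonneg u by simp
      ultimately show ?thesis by (simp add: D_def)
    qed
    have kw: "(b - a) * (D - p * w) = (w - (b - a) * Q0) * (w - u)"
    proof -
      have "(b - a) * (D - p * w) = (b - a) * D - ((b - a) * p) * w" by (simp add: algebra_simps)
      also have "\<dots> = (w - (b - a) * Q0) * (w - u)" unfolding p D_def by (simp add: algebra_simps)
      finally show ?thesis .
    qed
    have ku: "(b - a) * (D - p * u) = (w - u) * ((b - a) * P0 + u)"
    proof -
      have "(b - a) * (D - p * u) = (b - a) * D - ((b - a) * p) * u" by (simp add: algebra_simps)
      also have "\<dots> = (w - u) * ((b - a) * P0 + u)" unfolding p D_def by (simp add: algebra_simps)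
      finally show ?thesis .
    qed
    have "0 \<le> (w - (b - a) * Q0) * (w - u)" using w \<open>w > u\<close> by simp
    then have "0 \<le> (b - a) * (D - p * w)" by (simp only: kw)
    then have "p * w \<le> D" using ax by (simp add: zero_le_mult_iff)
    moreover have "0 \<le> (w - u) * ((b - a) * P0 + u)" using \<open>w > u\<close> u nonneg ax by simp
    then have "0 \<le> (b - a) * (D - p * u)" by (simp only: ku)
    then have "p * u \<le> D" using ax by (simp add: zero_le_mult_iff)
    moreover have "p \<ge> 0" using ax \<open>c \<ge> 0\<close> by (simp add: p_def)
    moreover have "w * P1 + u * Q1 = a * D" by (simp add: D_def u_def w_def algebra_simps)
    ultimately show ?thesis
      using rescale_balanced_weights[OF u _ _ D_def \<open>D > 0\<close>] u \<open>w > u\<close> by simp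
  qed
qed

lemma decompose_across_gap:
  assumes \<tau>: "is_dist \<tau>" and gap: "\<And>z. a < z \<Longrightarrow> z < b \<Longrightarrow> \<tau> z = 0"
    and x: "a < x" "x < b" and m0: "mom 0 \<tau> = c" and m1: "mom 1 \<tau> = c * x"
  defines "p \<equiv> c * (b - x) / (b - a)" and "q \<equiv> c * (x - a) / (b - a)"
  shows "\<exists>Ka Kb. is_dist Ka \<and> is_dist Kb \<and> \<tau> = (\<lambda>z. Ka z + Kb z) \<and>
           mom 0 Ka = p \<and> mom 1 Ka = p * a \<and> mom 0 Kb = q \<and> mom 1 Kb = q * b"
proof -
  define L where "L = (\<lambda>z. if z \<le> a then \<tau> z else 0)"
  define R where "R = (\<lambda>z. if \<not> z \<le> a then \<tau> z else 0)"
  have L: "is_dist L" and R: "is_dist R" unfolding L_def R_def by (auto intro: dist_restrict \<tau>)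
  have "\<tau> = (\<lambda>z. L z + R z)" by (auto simp: L_def R_def)
  then have mom_\<tau>: "mom j \<tau> = mom j L + mom j R" for j by (metis mom_add dist_imp_signed L R)
  have left: "mom 1 L \<le> a * mom 0 L" by (rule mom1_upper[OF L]) (auto simp: L_def split: if_splits)
  have right: "b * mom 0 R \<le> mom 1 R"
  proof (rule mom1_lower[OF R])
    fix z assume "R z \<noteq> 0"
    then have "\<not> z \<le> a" "\<tau> z \<noteq> 0" by (auto simp: R_def split: if_splits)
    then show "b \<le> z" using gap by force
  qed
  have sums: "mom 0 L + mom 0 R = c" "mom 1 L + mom 1 R = c * x" using mom_\<tau> m0 m1 by simp_all
  obtain s r where sr: "0 \<le> s" "s \<le> 1" "0 \<le> r" "r \<le> 1"
    and mass: "s * mom 0 L + r * mom 0 R = p" and first: "s * mom 1 L + r * mom 1 R = p * a"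
    using two_part_weights[OF x mom0_nonneg[OF L] mom0_nonneg[OF R] left right sums]
    unfolding p_def by blast
  define Ka where "Ka = (\<lambda>z. s * L z + r * R z)"
  define Kb where "Kb = (\<lambda>z. (1 - s) * L z + (1 - r) * R z)"
  have Ka: "is_dist Ka" and Kb: "is_dist Kb"
    unfolding Ka_def Kb_def using sr by (auto intro!: dist_add dist_scale L R)
  have split: "\<tau> = (\<lambda>z. Ka z + Kb z)" by (auto simp: Ka_def Kb_def L_def R_def algebra_simps)
  have mom_Ka: "mom j Ka = s * mom j L + r * mom j R" for j
    unfolding Ka_def by (simp add: mom_add mom_scale signed_scale dist_imp_signed L R)
  have mom_Kb: "mom j Kb = mom j \<tau> - mom j Ka" for j
    using mom_add[OF dist_imp_signed[OF Ka] dist_imp_signed[OF Kb], of j] split by simp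
  have "c - p = q" "c * x - p * a = q * b" using x by (simp_all add: p_def q_def field_simps)
  moreover have "mom 0 Ka = p" "mom 1 Ka = p * a" using mom_Ka mass first by simp_all
  ultimately have "mom 0 Kb = q" "mom 1 Kb = q * b" using mom_Kb m0 m1 by simp_all
  with Ka Kb split \<open>mom 0 Ka = p\<close> \<open>mom 1 Ka = p * a\<close> show ?thesis by blast
qed

lemma sweep_point_mass_le:
  assumes \<rho>: "is_dist \<rho>" and \<tau>: "is_dist \<tau>" and gap: "\<And>z. a < z \<Longrightarrow> z < b \<Longrightarrow> \<tau> z = 0"
    and c: "c \<ge> 0" and m0: "mom 0 \<tau> = c" and m1: "mom 1 \<tau> = c * x"
  shows "(\<lambda>z. \<rho> z + sweep a b (point_mass x c) z) \<preceq>\<^sub>s (\<lambda>z. \<rho> z + \<tau> z)"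
proof (cases "a < x \<and> x < b")
  case False
  then have "sweep a b (point_mass x c) = point_mass x c"
    by (intro sweep_fixed) (auto simp: point_mass_def)
  then show ?thesis using split_point_mass[OF \<rho> \<tau> c m0 m1] by simp
next
  case True
  define p where "p = c * (b - x) / (b - a)"
  define q where "q = c * (x - a) / (b - a)"
  have p: "p \<ge> 0" and q: "q \<ge> 0" using True c by (simp_all add: p_def q_def)
  obtain Ka Kb where Ka: "is_dist Ka" "mom 0 Ka = p" "mom 1 Ka = p * a"
    and Kb: "is_dist Kb" "mom 0 Kb = q" "mom 1 Kb = q * b" and \<tau>_eq: "\<tau> = (\<lambda>z. Ka z + Kb z)"
    using decompose_across_gap[OF \<tau> gap _ _ m0 m1] True unfolding p_def q_def by blast
  have "(\<lambda>z. \<rho> z + sweep a b (point_mass x c) z)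
        = (\<lambda>z. (\<rho> z + point_mass b q z) + point_mass a p z)"
    using sweep_point_mass_inside[of a x b c] True by (simp add: p_def q_def algebra_simps)
  also have "\<dots> \<preceq>\<^sub>s (\<lambda>z. (\<rho> z + point_mass b q z) + Ka z)"
    using split_point_mass[OF dist_add[OF \<rho> dist_point_mass[OF q]] Ka(1) p Ka(2,3)] .
  also have "\<dots> = (\<lambda>z. (\<rho> z + Ka z) + point_mass b q z)" by (simp add: algebra_simps)
  also have "\<dots> \<preceq>\<^sub>s (\<lambda>z. (\<rho> z + Ka z) + Kb z)"
    using split_point_mass[OF dist_add[OF \<rho> Ka(1)] Kb(1) q Kb(2,3)] .
  also have "\<dots> = (\<lambda>z. \<rho> z + \<tau> z)" by (simp add: \<tau>_eq algebra_simps)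
  finally show ?thesis .
qed

lemma sweep_mono_basic:
  assumes "basic_split \<mu> \<nu>" "is_dist \<mu>" "a \<le> b"
  shows "sweep a b \<mu> \<preceq>\<^sub>s sweep a b \<nu>"
proof -
  obtain x K where K: "is_dist K" "mom 0 K = \<mu> x" "mom 1 K = \<mu> x * x"
    and \<nu>: "\<nu> = (\<lambda>y. (if y = x then 0 else \<mu> y) + K y)"
    using assms(1) unfolding basic_split_def by blast
  define \<rho> where "\<rho> = (\<lambda>z. if z \<noteq> x then \<mu> z else 0)"
  have \<rho>: "is_dist \<rho>" unfolding \<rho>_def by (rule dist_restrict[OF assms(2)])
  have c: "\<mu> x \<ge> 0" using assms(2) by (simp add: is_dist_def)
  have "sweep a b \<mu> = sweep a b (\<lambda>z. \<rho> z + point_mass x (\<mu> x) z)"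
    by (rule arg_cong[where f = "sweep a b"]) (auto simp: \<rho>_def point_mass_def)
  also have "\<dots> = (\<lambda>z. sweep a b \<rho> z + sweep a b (point_mass x (\<mu> x)) z)"
    by (rule sweep_add[OF dist_imp_signed[OF \<rho>] signed_point_mass])
  also have "\<dots> \<preceq>\<^sub>s (\<lambda>z. sweep a b \<rho> z + sweep a b K z)"
  proof (rule sweep_point_mass_le[OF dist_sweep[OF \<rho> assms(3)] dist_sweep[OF K(1) assms(3)] _ c])
    show "sweep a b K z = 0" if "a < z" "z < b" for z using that by (rule sweep_vanishes_inside)
    show "mom 0 (sweep a b K) = \<mu> x" "mom 1 (sweep a b K) = \<mu> x * x"
      using sweep_moments[OF dist_imp_signed[OF K(1)]] K by auto
  qed
  also have "\<dots> = sweep a b \<nu>"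
  proof -
    have "\<nu> = (\<lambda>z. \<rho> z + K z)" by (auto simp: \<nu> \<rho>_def)
    then show ?thesis by (simp add: sweep_add dist_imp_signed \<rho> K(1))
  qed
  finally show ?thesis .
qed

lemma sweep_mono:
  assumes "\<mu> \<preceq>\<^sub>s \<nu>" "is_dist \<mu>" "a \<le> b"
  shows "sweep a b \<mu> \<preceq>\<^sub>s sweep a b \<nu>"
  using assms(1) unfolding split_le_def
proof (induction rule: rtranclp_induct)
  case base
  then show ?case by simp
next
  case (step \<nu> \<xi>)
  have "is_dist \<nu>" using step.hyps(1) assms(2) split_le_dist unfolding split_le_def by blast
  then have "sweep a b \<nu> \<preceq>\<^sub>s sweep a b \<xi>" using sweep_mono_basic[OF step.hyps(2) _ assms(3)] by blast
  then show ?case using step.IH split_le_trans unfolding split_le_def by blast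
qed

section \<open>Sequences of moves\<close>

lemma extreme_seq_mono:
  assumes "\<forall>v\<in>set V. is_move v" "\<mu> \<preceq>\<^sub>s \<nu>" "is_dist \<mu>"
  shows "extreme_seq V \<mu> \<preceq>\<^sub>s extreme_seq V \<nu>"
  using assms
proof (induction V arbitrary: \<mu> \<nu>)
  case Nil
  then show ?case by simp
next
  case (Cons v V)
  obtain a b \<delta> where v: "v = (a, b, \<delta>)" by (cases v) auto
  have ab: "a \<le> b" using Cons.prems(1) v by (simp add: is_move_def)
  have "is_dist \<nu>" using split_le_dist Cons.prems(2,3) by blast
  then have "extreme_move a b \<mu> = sweep a b \<mu>" "extreme_move a b \<nu> = sweep a b \<nu>"
    using extreme_move_eq_sweep ab Cons.prems(3) by auto
  moreover have "sweep a b \<mu> \<preceq>\<^sub>s sweep a b \<nu>" using sweep_mono Cons.prems(2,3) ab by blast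
  moreover have "is_dist (sweep a b \<mu>)" using dist_sweep Cons.prems(3) ab by blast
  ultimately show ?case using Cons.IH Cons.prems(1) v by simp
qed

text \<open>Induction on the move sequence: after the first move v on [a,b] the moved
  distribution is below its extreme move on [a,b], which coincides with the extreme
  move of the original distribution.\<close>
theorem mainTheorem11:
  fixes \<mu> :: sdist and V :: "move list"
  assumes "is_dist \<mu>"
    and "\<forall>v\<in>set V. is_move v"
    and "applies_seq V \<mu>"
  shows "apply_seq V \<mu> \<preceq>\<^sub>s extreme_seq V \<mu>"
  using assms
proof (induction V arbitrary: \<mu>)
  case Nil
  then show ?case by (simp add: split_le_def)
next
  case (Cons v V)
  obtain a b \<delta> where v: "v = (a, b, \<delta>)" by (cases v) auto
  let ?\<mu>1 = "apply_move v \<mu>"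
  have move: "is_move (a, b, \<delta>)" and ab: "a \<le> b" using Cons.prems(2) v by (auto simp: is_move_def)
  have \<mu>1: "is_dist ?\<mu>1" "applies_seq V ?\<mu>1" using Cons.prems(3) by (simp_all add: move_applies_def)
  have "apply_seq (v # V) \<mu> = apply_seq V ?\<mu>1" by simp
  also have "\<dots> \<preceq>\<^sub>s extreme_seq V ?\<mu>1" using Cons.IH \<mu>1 Cons.prems(2) by simp
  also have "\<dots> \<preceq>\<^sub>s extreme_seq V (extreme_move a b ?\<mu>1)"
    using extreme_seq_mono le_sweep extreme_move_eq_sweep \<mu>1(1) ab Cons.prems(2) by simp
  also have "extreme_move a b ?\<mu>1 = extreme_move a b \<mu>"
    using extreme_move_after_move[OF move dist_imp_signed[OF Cons.prems(1)]] v by simp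
  also have "extreme_seq V (extreme_move a b \<mu>) = extreme_seq (v # V) \<mu>" using v by simp
  finally show ?case .
qed

end
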